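(* Let $p$ be a prime and $G$ a finite $p$-group of maximal class which has an abelian maximal subgroup. Then every non-abelian subgroup $H$ of $G$ satisfies $C_G(H)\le H$.
   Context: A group of order $p^n$ ($n\ge 2$) has maximal class if its nilpotency class is $n-1$. $C_G(H)$ denotes the centralizer of $H$ in $G$. *)

theory Defs
  imports "HOL-Algebra.Algebra"
begin

definition commutator :: "('a, 'b) monoid_scheme \<Rightarrow> 'a \<Rightarrow> 'a \<Rightarrow> 'a" where
  "commutator G x y = inv\<^bsub>G\<^esub> x \<otimes>\<^bsub>G\<^esub> inv\<^bsub>G\<^esub> y \<otimes>\<^bsub>G\<^esub> x \<otimes>\<^bsub>G\<^esub> y"

definition commutator_subgroup :: "('a, 'b) monoid_scheme \<Rightarrow> 'a set \<Rightarrow> 'a set \<Rightarrow> 'a set" where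
  "commutator_subgroup G A B = generate G {commutator G a b | a b. a \<in> A \<and> b \<in> B}"

text \<open>Lower central series, shifted: lower_central G i = gamma_(i+1)(G).\<close>
primrec lower_central :: "('a, 'b) monoid_scheme \<Rightarrow> nat \<Rightarrow> 'a set" where
  "lower_central G 0 = carrier G"
| "lower_central G (Suc i) = commutator_subgroup G (lower_central G i) (carrier G)"

definition nilpotency_class :: "('a, 'b) monoid_scheme \<Rightarrow> nat" where
  "nilpotency_class G = (LEAST c. lower_central G c = {\<one>\<^bsub>G\<^esub>})"

definition nilpotent_group :: "('a, 'b) monoid_scheme \<Rightarrow> bool" where
  "nilpotent_group G = (\<exists>c. lower_central G c = {\<one>\<^bsub>G\<^esub>})"

definition maximal_class :: "('a, 'b) monoid_scheme \<Rightarrow> nat \<Rightarrow> bool" where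
  "maximal_class G p = (\<exists>n. n \<ge> 2 \<and> order G = p ^ n \<and> nilpotent_group G
      \<and> nilpotency_class G = n - 1)"

definition centralizer :: "('a, 'b) monoid_scheme \<Rightarrow> 'a set \<Rightarrow> 'a set" where
  "centralizer G H = {g \<in> carrier G. \<forall>h \<in> H. g \<otimes>\<^bsub>G\<^esub> h = h \<otimes>\<^bsub>G\<^esub> g}"

definition abelian_set :: "('a, 'b) monoid_scheme \<Rightarrow> 'a set \<Rightarrow> bool" where
  "abelian_set G H = (\<forall>x \<in> H. \<forall>y \<in> H. x \<otimes>\<^bsub>G\<^esub> y = y \<otimes>\<^bsub>G\<^esub> x)"

definition maximal_subgroup :: "('a, 'b) monoid_scheme \<Rightarrow> 'a set \<Rightarrow> bool" where
  "maximal_subgroup G M = (subgroup M G \<and> M \<noteq> carrier G \<and>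
      (\<forall>K. subgroup K G \<and> M \<subseteq> K \<longrightarrow> K = M \<or> K = carrier G))"

end

theory Submission
  imports Defs
begin

text \<open>
  Let \<open>A\<close> be the abelian maximal subgroup and pick \<open>h \<in> H - A\<close>, so that \<open>G = A\<langle>h\<rangle>\<close>.
  The map \<open>x \<mapsto> [x, h]\<close> is an endomorphism of \<open>A\<close> with kernel \<open>A \<inter> Z(G)\<close>, and for
  \<open>k \<ge> 1\<close> its \<open>k\<close>-th image is the \<open>(k+1)\<close>-st term of the lower central series. Maximal
  class forces these images to drop by a factor \<open>p\<close> at each of the \<open>n - 3\<close> steps from
  \<open>\<gamma>\<^sub>2(G)\<close> down to the last nontrivial term, so \<open>|\<gamma>\<^sub>2(G)| \<ge> p^(n-2)\<close> and
  \<open>|A \<inter> Z(G)| \<le> p\<close>. As \<open>H\<close> is nonabelian, some \<open>a \<in> H \<inter> A\<close> is not central; its last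
  nontrivial iterate under \<open>x \<mapsto> [x, h]\<close> is a nontrivial element of \<open>H \<inter> A \<inter> Z(G)\<close>,
  whence \<open>A \<inter> Z(G) \<le> H\<close>. Finally, an element centralising \<open>H\<close> is central if it lies in
  \<open>A\<close> (it commutes with \<open>A\<close> and with \<open>h\<close>); if it lies outside \<open>A\<close>, the same argument
  makes \<open>H \<inter> A\<close> central and hence \<open>H = (H \<inter> A)\<langle>h\<rangle>\<close> abelian.
\<close>

abbreviation center :: "('a, 'b) monoid_scheme \<Rightarrow> 'a set" where
  "center G \<equiv> centralizer G (carrier G)"

section \<open>Commutators and the lower central series\<close>

context group
begin

lemma m_inv_cancel_left: "x \<in> carrier G \<Longrightarrow> y \<in> carrier G \<Longrightarrow> x \<otimes> (inv x \<otimes> y) = y"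
  by (simp add: m_assoc [symmetric])

lemma inv_m_cancel_left: "x \<in> carrier G \<Longrightarrow> y \<in> carrier G \<Longrightarrow> inv x \<otimes> (x \<otimes> y) = y"
  by (simp add: m_assoc [symmetric])

lemmas group_cancel_simps = m_assoc m_inv_cancel_left inv_m_cancel_left inv_mult_group

lemma commutator_closed [simp]:
  "x \<in> carrier G \<Longrightarrow> y \<in> carrier G \<Longrightarrow> commutator G x y \<in> carrier G"
  by (simp add: commutator_def)

lemma commutator_swap:
  "x \<in> carrier G \<Longrightarrow> y \<in> carrier G \<Longrightarrow> commutator G x y = inv (commutator G y x)"
  by (simp add: commutator_def group_cancel_simps)

lemma commutator_mult_right:
  "x \<in> carrier G \<Longrightarrow> y \<in> carrier G \<Longrightarrow> z \<in> carrier G \<Longrightarrow>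
    commutator G x (y \<otimes> z) = commutator G x z \<otimes> (inv z \<otimes> commutator G x y \<otimes> z)"
  by (simp add: commutator_def group_cancel_simps)

lemma commutator_mult_left:
  "x \<in> carrier G \<Longrightarrow> y \<in> carrier G \<Longrightarrow> z \<in> carrier G \<Longrightarrow>
    commutator G (x \<otimes> y) z = (inv y \<otimes> commutator G x z \<otimes> y) \<otimes> commutator G y z"
  by (simp add: commutator_def group_cancel_simps)

lemma commutator_conj:
  "x \<in> carrier G \<Longrightarrow> y \<in> carrier G \<Longrightarrow> g \<in> carrier G \<Longrightarrow>
    inv g \<otimes> commutator G x y \<otimes> g = commutator G (inv g \<otimes> x \<otimes> g) (inv g \<otimes> y \<otimes> g)"
  by (simp add: commutator_def group_cancel_simps)

lemma conj_eq_mult_commutator: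
  "x \<in> carrier G \<Longrightarrow> u \<in> carrier G \<Longrightarrow> inv u \<otimes> x \<otimes> u = x \<otimes> commutator G x u"
  by (simp add: commutator_def group_cancel_simps)

lemma commutator_eq_one_iff:
  assumes "x \<in> carrier G" and "y \<in> carrier G"
  shows "commutator G x y = \<one> \<longleftrightarrow> x \<otimes> y = y \<otimes> x"
proof -
  have "commutator G x y = inv (y \<otimes> x) \<otimes> (x \<otimes> y)"
    using assms by (simp add: commutator_def group_cancel_simps)
  then show ?thesis
    using assms by (metis inv_closed m_closed inv_equality inv_inv r_inv)
qed

lemma subgroup_commutator_closed:
  "subgroup H G \<Longrightarrow> x \<in> H \<Longrightarrow> y \<in> H \<Longrightarrow> commutator G x y \<in> H"
  by (simp add: commutator_def subgroup.m_closed subgroup.m_inv_closed)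

lemma subgroup_nat_pow_closed: "subgroup H G \<Longrightarrow> x \<in> H \<Longrightarrow> x [^] (i::nat) \<in> H"
  by (induction i) (auto simp: subgroup.one_closed subgroup.m_closed)

lemma subgroup_centralizer:
  assumes "S \<subseteq> carrier G"
  shows "subgroup (centralizer G S) G"
proof (rule subgroupI)
  show "centralizer G S \<subseteq> carrier G" by (auto simp: centralizer_def)
  have "\<one> \<in> centralizer G S" using assms by (auto simp: centralizer_def)
  then show "centralizer G S \<noteq> {}" by blast
next
  fix a assume a: "a \<in> centralizer G S"
  then have ac: "a \<in> carrier G" by (simp add: centralizer_def)
  have "inv a \<otimes> s = s \<otimes> inv a" if s: "s \<in> S" for s
  proof -
    have "inv a \<otimes> (a \<otimes> s) \<otimes> inv a = inv a \<otimes> (s \<otimes> a) \<otimes> inv a"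
      using a s by (simp add: centralizer_def)
    then show ?thesis using ac s assms by (auto simp: group_cancel_simps)
  qed
  then show "inv a \<in> centralizer G S" using ac by (simp add: centralizer_def)
next
  fix a b assume a: "a \<in> centralizer G S" and b: "b \<in> centralizer G S"
  have "a \<otimes> b \<otimes> s = s \<otimes> (a \<otimes> b)" if s: "s \<in> S" for s
  proof -
    have ac: "a \<in> carrier G" and bc: "b \<in> carrier G" and sc: "s \<in> carrier G"
      using a b s assms by (auto simp: centralizer_def)
    have "a \<otimes> b \<otimes> s = a \<otimes> (s \<otimes> b)" using b s ac bc sc by (simp add: centralizer_def m_assoc)
    also have "\<dots> = s \<otimes> (a \<otimes> b)" using a s ac bc sc by (simp add: centralizer_def m_assoc [symmetric])
    finally show ?thesis .
  qed
  then show "a \<otimes> b \<in> centralizer G S" using a b by (simp add: centralizer_def)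
qed

lemma lower_central_subset_carrier: "lower_central G i \<subseteq> carrier G"
proof (induction i)
  case (Suc i)
  then have "{commutator G a b | a b. a \<in> lower_central G i \<and> b \<in> carrier G} \<subseteq> carrier G"
    by auto
  then show ?case by (simp add: commutator_subgroup_def generate_incl)
qed simp

lemma subgroup_lower_central: "subgroup (lower_central G i) G"
proof (cases i)
  case (Suc j)
  have "{commutator G a b | a b. a \<in> lower_central G j \<and> b \<in> carrier G} \<subseteq> carrier G"
    using lower_central_subset_carrier by (auto intro!: commutator_closed)
  then show ?thesis using Suc by (simp add: commutator_subgroup_def generate_is_subgroup)
qed (simp add: subgroup_self)

lemma commutator_in_lower_central_Suc:
  "u \<in> lower_central G i \<Longrightarrow> g \<in> carrier G \<Longrightarrow> commutator G u g \<in> lower_central G (Suc i)"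
  by (auto simp: commutator_subgroup_def intro: generate.incl)

lemma lower_central_Suc_subsetI:
  "subgroup M G \<Longrightarrow> (\<And>u g. u \<in> lower_central G i \<Longrightarrow> g \<in> carrier G \<Longrightarrow> commutator G u g \<in> M)
    \<Longrightarrow> lower_central G (Suc i) \<subseteq> M"
  unfolding lower_central.simps commutator_subgroup_def by (rule generate_subgroup_incl) auto

lemma abelian_set_if_lower_central_one:
  assumes "lower_central G 1 = {\<one>}" and "H \<subseteq> carrier G"
  shows "abelian_set G H"
  unfolding abelian_set_def
proof (intro ballI)
  fix x y assume "x \<in> H" "y \<in> H"
  with assms(2) have x: "x \<in> carrier G" and y: "y \<in> carrier G" by auto
  have "commutator G x y \<in> lower_central G 1"
    using commutator_in_lower_central_Suc[of x 0 y] x y by simp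
  with assms(1) show "x \<otimes> y = y \<otimes> x" by (simp add: commutator_eq_one_iff [OF x y])
qed

end

section \<open>Finite groups and \<open>p\<close>-groups\<close>

context group
begin

lemma finite_subgroupI:
  assumes fin: "finite (carrier G)" and S: "S \<subseteq> carrier G" "\<one> \<in> S"
    and mult: "\<And>x y. x \<in> S \<Longrightarrow> y \<in> S \<Longrightarrow> x \<otimes> y \<in> S"
  shows "subgroup S G"
proof (rule subgroupI)
  show "S \<subseteq> carrier G" "S \<noteq> {}" using S by auto
  show "x \<otimes> y \<in> S" if "x \<in> S" "y \<in> S" for x y using mult that .
  fix x assume x: "x \<in> S"
  then have xc: "x \<in> carrier G" using S by auto
  have pow: "x [^] (k::nat) \<in> S" for k
    by (induction k) (use S x mult in auto)
  have "order G \<ge> 1" using fin order_gt_0_iff_finite by (simp add: Suc_le_eq)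
  then have "x [^] (order G - 1) \<otimes> x = x [^] order G"
    by (metis Suc_diff_le diff_Suc_1 nat_pow_Suc)
  then have "x [^] (order G - 1) \<otimes> x = \<one>" by (simp add: pow_order_eq_1 [OF xc])
  then have "inv x = x [^] (order G - 1)" using xc by (simp add: inv_equality)
  then show "inv x \<in> S" using pow by simp
qed

lemma card_subgroup_prime_power:
  assumes "Factorial_Ring.prime p" and "order G = p ^ n" and "subgroup K G"
  shows "\<exists>e\<le>n. card K = p ^ e"
proof -
  have "card K dvd p ^ n" using lagrange [OF assms(3)] assms(2) by (metis dvd_triv_right)
  then show ?thesis using divides_primepow_nat [OF assms(1)] by auto
qed

lemma finite_carrier_if_order_prime_power:
  assumes "Factorial_Ring.prime p" and "order G = p ^ n"
  shows "finite (carrier G)"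
  using assms prime_gt_0_nat order_gt_0_iff_finite by (metis zero_less_power)

lemma prime_le_card_subgroup:
  assumes p: "Factorial_Ring.prime p" and order: "order G = p ^ n"
    and K: "subgroup K G" and nontrivial: "K \<noteq> {\<one>}"
  shows "p \<le> card K"
proof -
  obtain e where e: "card K = p ^ e" using card_subgroup_prime_power [OF p order K] by blast
  have "finite (carrier G)" using finite_carrier_if_order_prime_power [OF p order] .
  then have "finite K" using K subgroup.subset finite_subset by metis
  moreover obtain x where "x \<in> K" "x \<noteq> \<one>" using nontrivial subgroup.one_closed [OF K] by blast
  ultimately have "card {\<one>, x} \<le> card K" using subgroup.one_closed [OF K] by (intro card_mono) auto
  with \<open>x \<noteq> \<one>\<close> have "e \<noteq> 0" using e by (cases e) auto
  then show ?thesis using e prime_gt_1_nat [OF p] by (simp add: self_le_power)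
qed

lemma prime_mult_card_le_card_psubset:
  assumes p: "Factorial_Ring.prime p" and order: "order G = p ^ n"
    and K: "subgroup K G" and L: "subgroup L G" and "K \<subset> L"
  shows "p * card K \<le> card L"
proof -
  have "finite (carrier G)" using finite_carrier_if_order_prime_power [OF p order] .
  then have "card K < card L" using \<open>K \<subset> L\<close> L subgroup.subset finite_subset psubset_card_mono
    by metis
  moreover obtain a where a: "card K = p ^ a" using card_subgroup_prime_power [OF p order K] by blast
  moreover obtain b where b: "card L = p ^ b" using card_subgroup_prime_power [OF p order L] by blast
  ultimately have "Suc a \<le> b" using prime_gt_1_nat [OF p] by (simp add: power_strict_increasing_iff)
  then have "p ^ Suc a \<le> p ^ b" using prime_gt_1_nat [OF p] by (intro power_increasing) auto
  then show ?thesis using a b by simp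
qed

lemma subgroup_eq_if_card_le_prime:
  assumes p: "Factorial_Ring.prime p" and order: "order G = p ^ n"
    and K: "subgroup K G" and L: "subgroup L G" and "K \<subseteq> L"
    and "card L \<le> p" and "K \<noteq> {\<one>}"
  shows "K = L"
proof (rule ccontr)
  assume "K \<noteq> L"
  have "p * p \<le> p * card K"
    using prime_le_card_subgroup [OF p order K \<open>K \<noteq> {\<one>}\<close>] by (rule mult_le_mono2)
  also have "\<dots> \<le> card L"
    using prime_mult_card_le_card_psubset [OF p order K L] \<open>K \<subseteq> L\<close> \<open>K \<noteq> L\<close> by blast
  also have "\<dots> \<le> p * 1" using \<open>card L \<le> p\<close> by simp
  finally have "p * p \<le> p * 1" .
  then show False using prime_gt_1_nat [OF p] by simp
qed

lemma prime_power_mult_card_le_of_chain: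
  assumes p: "Factorial_Ring.prime p" and order: "order G = p ^ n"
    and S: "\<And>k. subgroup (S k) G" and strict: "\<And>k. k < m \<Longrightarrow> S (Suc k) \<subset> S k"
  shows "p ^ m * card (S m) \<le> card (S 0)"
  using strict
proof (induction m)
  case (Suc m)
  have "p ^ Suc m * card (S (Suc m)) = p ^ m * (p * card (S (Suc m)))" by simp
  also have "\<dots> \<le> p ^ m * card (S m)"
    using prime_mult_card_le_card_psubset [OF p order S S Suc.prems] by simp
  also have "\<dots> \<le> card (S 0)" using Suc by simp
  finally show ?case .
qed simp

lemma subgroup_conj_stabilizer:
  assumes fin: "finite (carrier G)" and A_carrier: "A \<subseteq> carrier G"
  shows "subgroup {g \<in> carrier G. \<forall>a\<in>A. inv g \<otimes> a \<otimes> g \<in> A} G" (is "subgroup ?N G")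
proof (rule finite_subgroupI [OF fin])
  show "?N \<subseteq> carrier G" "\<one> \<in> ?N" using A_carrier by auto
  fix x y assume x: "x \<in> ?N" and y: "y \<in> ?N"
  then have xc: "x \<in> carrier G" and yc: "y \<in> carrier G" by auto
  have "inv (x \<otimes> y) \<otimes> a \<otimes> (x \<otimes> y) \<in> A" if a: "a \<in> A" for a
  proof -
    have "inv y \<otimes> (inv x \<otimes> a \<otimes> x) \<otimes> y \<in> A" using x y a by auto
    moreover have "inv y \<otimes> (inv x \<otimes> a \<otimes> x) \<otimes> y = inv (x \<otimes> y) \<otimes> a \<otimes> (x \<otimes> y)"
      using xc yc a A_carrier by (auto simp: group_cancel_simps)
    ultimately show ?thesis by simp
  qed
  then show "x \<otimes> y \<in> ?N" using xc yc by simp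
qed

lemma maximal_subgroup_normal:
  assumes fin: "finite (carrier G)" and nilpotent: "lower_central G m = {\<one>}"
    and max: "maximal_subgroup G A"
  shows "A \<lhd> G"
proof -
  have A: "subgroup A G" and proper: "A \<noteq> carrier G"
    and maximal: "\<And>K. subgroup K G \<Longrightarrow> A \<subseteq> K \<Longrightarrow> K = A \<or> K = carrier G"
    using max unfolding maximal_subgroup_def by auto
  have A_carrier: "A \<subseteq> carrier G" using A subgroup.subset by blast
  have ex: "\<exists>k. lower_central G k \<subseteq> A"
    using nilpotent subgroup.one_closed [OF A] by (intro exI [of _ m]) simp
  define k where "k = (LEAST k. lower_central G k \<subseteq> A)"
  have k: "lower_central G k \<subseteq> A" unfolding k_def using LeastI_ex [OF ex] .
  have "k \<noteq> 0" using k proper A_carrier by auto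
  then obtain j where kj: "k = Suc j" using not0_implies_Suc by blast
  have "\<not> lower_central G j \<subseteq> A"
    using not_less_Least [of j "\<lambda>k. lower_central G k \<subseteq> A"] kj k_def by auto
  then obtain u where u: "u \<in> lower_central G j" "u \<notin> A" by auto
  have uc: "u \<in> carrier G" using u lower_central_subset_carrier by auto
  \<comment> \<open>\<open>u\<close> lies in the last term of the lower central series not contained in \<open>A\<close>,
    so \<open>[u, a] \<in> A\<close>: \<open>u\<close> normalises \<open>A\<close>, and maximality makes the normaliser all of \<open>G\<close>\<close>
  define N where "N = {g \<in> carrier G. \<forall>a\<in>A. inv g \<otimes> a \<otimes> g \<in> A}"
  have "inv u \<otimes> a \<otimes> u \<in> A" if a: "a \<in> A" for a
  proof -
    have ac: "a \<in> carrier G" using a A_carrier by auto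
    have "commutator G u a \<in> A" using commutator_in_lower_central_Suc [OF u(1) ac] k kj by auto
    then have "commutator G a u \<in> A"
      using commutator_swap [OF ac uc] subgroup.m_inv_closed [OF A] by simp
    then show ?thesis
      using conj_eq_mult_commutator [OF ac uc] a subgroup.m_closed [OF A] by simp
  qed
  then have "u \<in> N" using uc by (simp add: N_def)
  moreover have "A \<subseteq> N"
    using A_carrier A by (auto simp: N_def intro: subgroup.m_closed subgroup.m_inv_closed)
  ultimately have "N = carrier G"
    using maximal [OF subgroup_conj_stabilizer [OF fin A_carrier, folded N_def]] u(2) by auto
  show ?thesis
  proof (subst normal_inv_iff, intro conjI A ballI)
    fix x a assume "x \<in> carrier G" and "a \<in> A"
    then have "inv x \<in> N" using \<open>N = carrier G\<close> by simp
    then show "x \<otimes> a \<otimes> inv x \<in> A" using \<open>x \<in> carrier G\<close> \<open>a \<in> A\<close> by (simp add: N_def)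
  qed
qed

lemma maximal_normal_subgroup_decomp:
  assumes fin: "finite (carrier G)" and normal: "A \<lhd> G" and max: "maximal_subgroup G A"
    and t: "t \<in> carrier G" "t \<notin> A" and g: "g \<in> carrier G"
  shows "\<exists>a\<in>A. \<exists>i::nat. g = a \<otimes> t [^] i"
proof -
  have A: "subgroup A G"
    and maximal: "\<And>K. subgroup K G \<Longrightarrow> A \<subseteq> K \<Longrightarrow> K = A \<or> K = carrier G"
    using max unfolding maximal_subgroup_def by auto
  have A_carrier: "A \<subseteq> carrier G" using A subgroup.subset by blast
  define S where "S = {a \<otimes> t [^] i | a i. a \<in> A \<and> (i::nat) \<ge> 0}"
  have "subgroup S G"
  proof (rule finite_subgroupI [OF fin])
    show "S \<subseteq> carrier G" using A_carrier t by (auto simp: S_def)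
    show "\<one> \<in> S" unfolding S_def using subgroup.one_closed [OF A]
      by (intro CollectI exI [of _ \<one>] exI [of _ "0::nat"]) auto
    fix x y assume "x \<in> S" "y \<in> S"
    then obtain a i b j where x: "x = a \<otimes> t [^] (i::nat)" "a \<in> A"
      and y: "y = b \<otimes> t [^] (j::nat)" "b \<in> A"
      unfolding S_def by auto
    have ac: "a \<in> carrier G" and bc: "b \<in> carrier G" using x y A_carrier by auto
    have "t [^] i \<otimes> b \<otimes> inv (t [^] i) \<in> A"
      using normal.inv_op_closed2 [OF normal _ y(2)] t by auto
    then have "a \<otimes> (t [^] i \<otimes> b \<otimes> inv (t [^] i)) \<in> A"
      using x(2) subgroup.m_closed [OF A] by auto
    moreover have "x \<otimes> y = (a \<otimes> (t [^] i \<otimes> b \<otimes> inv (t [^] i))) \<otimes> t [^] (i + j)"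
      using ac bc t x y by (simp add: nat_pow_mult [symmetric] group_cancel_simps)
    ultimately show "x \<otimes> y \<in> S" unfolding S_def by blast
  qed
  moreover have "A \<subseteq> S"
  proof
    fix a assume "a \<in> A"
    then have "a = a \<otimes> t [^] (0::nat) \<and> a \<in> A" using A_carrier by auto
    then show "a \<in> S" unfolding S_def by blast
  qed
  moreover have "t \<in> S" unfolding S_def using subgroup.one_closed [OF A] t
    by (intro CollectI exI [of _ \<one>] exI [of _ "1::nat"]) auto
  ultimately have "S = carrier G" using maximal t by blast
  then show ?thesis using g unfolding S_def by auto
qed

end

lemma (in group_hom) card_eq_card_image_mult_card_kernel:
  assumes "finite (carrier G)" and onto: "h ` carrier G = carrier H"
  shows "card (carrier G) = card (carrier H) * card (kernel G H h)"
proof -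
  have "card (carrier (G Mod kernel G H h)) = card (carrier H)"
    using iso_same_card [OF FactGroup_iso [OF onto]] .
  moreover have "card (rcosets (kernel G H h)) * card (kernel G H h) = order G"
    using G.lagrange [OF subgroup_kernel] .
  ultimately show ?thesis by (simp add: FactGroup_def order_def)
qed

lemma maximal_class_lower_central:
  assumes "maximal_class G p"
  obtains n where "n \<ge> 2" and "order G = p ^ n"
    and "lower_central G (n - 1) = {\<one>\<^bsub>G\<^esub>}" and "lower_central G (n - 2) \<noteq> {\<one>\<^bsub>G\<^esub>}"
proof -
  obtain n where n: "n \<ge> 2" "order G = p ^ n" and nil: "nilpotent_group G"
    and nil_class: "nilpotency_class G = n - 1"
    using assms unfolding maximal_class_def by blast
  have ex: "\<exists>c. lower_central G c = {\<one>\<^bsub>G\<^esub>}" using nil unfolding nilpotent_group_def .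
  have "lower_central G (n - 1) = {\<one>\<^bsub>G\<^esub>}"
    using LeastI_ex [OF ex] nil_class unfolding nilpotency_class_def by simp
  moreover have "lower_central G (n - 2) \<noteq> {\<one>\<^bsub>G\<^esub>}"
  proof
    assume "lower_central G (n - 2) = {\<one>\<^bsub>G\<^esub>}"
    then have "nilpotency_class G \<le> n - 2" unfolding nilpotency_class_def by (rule Least_le)
    with nil_class n show False by simp
  qed
  ultimately show ?thesis using that n by blast
qed

section \<open>An abelian maximal subgroup and the map \<open>x \<mapsto> [x, h]\<close>\<close>

locale abelian_maximal_subgroup = group G for G (structure) +
  fixes A
  assumes finite_carrier: "finite (carrier G)"
    and maximal: "maximal_subgroup G A"
    and normal: "A \<lhd> G"
    and abelian: "abelian_set G A"
begin

lemma subgroup_A: "subgroup A G"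
  using maximal unfolding maximal_subgroup_def by blast

lemma A_carrier: "x \<in> A \<Longrightarrow> x \<in> carrier G"
  using subgroup.mem_carrier [OF subgroup_A] .

lemma A_commute: "x \<in> A \<Longrightarrow> y \<in> A \<Longrightarrow> x \<otimes> y = y \<otimes> x"
  using abelian unfolding abelian_set_def by blast

lemma mult_pow_decomp:
  "t \<in> carrier G \<Longrightarrow> t \<notin> A \<Longrightarrow> g \<in> carrier G \<Longrightarrow> \<exists>a\<in>A. \<exists>i::nat. g = a \<otimes> t [^] i"
  using maximal_normal_subgroup_decomp [OF finite_carrier normal maximal] .

lemma central_if_commutes_outside:
  assumes x: "x \<in> A" and t: "t \<in> carrier G" "t \<notin> A" and xt: "x \<otimes> t = t \<otimes> x"
  shows "x \<in> center G"
proof -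
  have "x \<otimes> g = g \<otimes> x" if g: "g \<in> carrier G" for g
  proof -
    obtain a i where a: "a \<in> A" and g_eq: "g = a \<otimes> t [^] (i::nat)" using mult_pow_decomp [OF t g] by blast
    have xc: "x \<in> carrier G" and ac: "a \<in> carrier G" using A_carrier x a by auto
    have "x \<otimes> g = (x \<otimes> a) \<otimes> t [^] i" using xc ac t by (simp add: g_eq m_assoc)
    also have "\<dots> = a \<otimes> (x \<otimes> t [^] i)" using xc ac t by (simp add: A_commute [OF x a] m_assoc)
    also have "\<dots> = a \<otimes> (t [^] i \<otimes> x)" using group_commutes_pow [OF xt [symmetric]] xc t by simp
    also have "\<dots> = g \<otimes> x" using xc ac t by (simp add: g_eq m_assoc)
    finally show ?thesis .
  qed
  with A_carrier [OF x] show ?thesis by (simp add: centralizer_def)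
qed

lemma abelian_set_if_inter_central:
  assumes H: "subgroup H G" and t: "t \<in> H" "t \<notin> A" and central: "H \<inter> A \<subseteq> center G"
  shows "abelian_set G H"
  unfolding abelian_set_def
proof (intro ballI)
  have tc: "t \<in> carrier G" using subgroup.mem_carrier [OF H t(1)] .
  have decomp_H: "\<exists>a i. a \<in> center G \<and> z = a \<otimes> t [^] (i::nat)" if z: "z \<in> H" for z
  proof -
    have zc: "z \<in> carrier G" using subgroup.mem_carrier [OF H z] .
    obtain a i where a: "a \<in> A" and z_eq: "z = a \<otimes> t [^] (i::nat)" using mult_pow_decomp [OF tc t(2) zc] by blast
    have "a = z \<otimes> inv (t [^] i)" using z_eq A_carrier [OF a] tc by (simp add: group_cancel_simps)
    then have "a \<in> H"
      using subgroup_nat_pow_closed [OF H t(1)] z subgroup.m_closed [OF H] subgroup.m_inv_closed [OF H]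
      by simp
    with a central have "a \<in> center G" by blast
    with z_eq show ?thesis by blast
  qed
  fix x y assume "x \<in> H" "y \<in> H"
  obtain a i where a: "a \<in> center G" and x: "x = a \<otimes> t [^] (i::nat)"
    using decomp_H [OF \<open>x \<in> H\<close>] by blast
  obtain b j where b: "b \<in> center G" and y: "y = b \<otimes> t [^] (j::nat)"
    using decomp_H [OF \<open>y \<in> H\<close>] by blast
  have ac: "a \<in> carrier G" and a_comm: "\<And>g. g \<in> carrier G \<Longrightarrow> a \<otimes> g = g \<otimes> a"
    using a by (simp_all add: centralizer_def)
  have bc: "b \<in> carrier G" and b_comm: "\<And>g. g \<in> carrier G \<Longrightarrow> b \<otimes> g = g \<otimes> b"
    using b by (simp_all add: centralizer_def)
  have "x \<otimes> y = a \<otimes> (t [^] i \<otimes> b) \<otimes> t [^] j" using ac bc tc by (simp add: x y m_assoc)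
  also have "\<dots> = a \<otimes> (b \<otimes> t [^] i) \<otimes> t [^] j" using b_comm [of "t [^] i"] tc by simp
  also have "\<dots> = (a \<otimes> b) \<otimes> (t [^] i \<otimes> t [^] j)" using ac bc tc by (simp add: m_assoc)
  also have "\<dots> = (b \<otimes> a) \<otimes> (t [^] j \<otimes> t [^] i)"
    using a_comm [OF bc] nat_pow_comm [of t i j] tc by simp
  also have "\<dots> = b \<otimes> (a \<otimes> t [^] j) \<otimes> t [^] i" using ac bc tc by (simp add: m_assoc)
  also have "\<dots> = b \<otimes> (t [^] j \<otimes> a) \<otimes> t [^] i" using a_comm [of "t [^] j"] tc by simp
  also have "\<dots> = y \<otimes> x" using ac bc tc by (simp add: x y m_assoc)
  finally show "x \<otimes> y = y \<otimes> x" .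
qed

end

locale commutator_endomorphism = abelian_maximal_subgroup +
  fixes h
  assumes h_carrier: "h \<in> carrier G" and h_notin: "h \<notin> A"
begin

definition phi :: "'a \<Rightarrow> 'a" where
  "phi x = commutator G x h"

definition phi_image :: "nat \<Rightarrow> 'a set" where
  "phi_image k = (phi ^^ k) ` A"

lemma phi_eq: "x \<in> carrier G \<Longrightarrow> phi x = inv x \<otimes> (inv h \<otimes> x \<otimes> h)"
  by (simp add: phi_def commutator_def group_cancel_simps h_carrier)

lemma conj_h_closed: "x \<in> A \<Longrightarrow> inv h \<otimes> x \<otimes> h \<in> A"
  using normal.inv_op_closed1 [OF normal h_carrier] by blast

lemma phi_closed: "x \<in> A \<Longrightarrow> phi x \<in> A"
  using phi_eq A_carrier conj_h_closed subgroup.m_closed [OF subgroup_A]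
    subgroup.m_inv_closed [OF subgroup_A] by simp

lemma phi_mult:
  assumes x: "x \<in> A" and y: "y \<in> A"
  shows "phi (x \<otimes> y) = phi x \<otimes> phi y"
proof -
  let ?x' = "inv h \<otimes> x \<otimes> h" and ?y' = "inv h \<otimes> y \<otimes> h"
  have xc: "x \<in> carrier G" and yc: "y \<in> carrier G" using x y A_carrier by auto
  have x_inv: "inv x \<in> A" and y_inv: "inv y \<in> A"
    using x y subgroup.m_inv_closed [OF subgroup_A] by auto
  have "phi (x \<otimes> y) = inv y \<otimes> inv x \<otimes> ?x' \<otimes> ?y'"
    using xc yc h_carrier by (simp add: phi_eq group_cancel_simps)
  also have "\<dots> = inv x \<otimes> (inv y \<otimes> ?x') \<otimes> ?y'"
    using A_commute [OF y_inv x_inv] xc yc h_carrier by (simp add: m_assoc)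
  also have "\<dots> = inv x \<otimes> (?x' \<otimes> inv y) \<otimes> ?y'"
    using A_commute [OF y_inv conj_h_closed [OF x]] by simp
  also have "\<dots> = phi x \<otimes> phi y"
    using xc yc h_carrier by (simp add: phi_eq group_cancel_simps)
  finally show ?thesis .
qed

lemma phi_one: "phi \<one> = \<one>"
  by (simp add: phi_def commutator_def h_carrier)

lemma phi_inv:
  assumes x: "x \<in> A"
  shows "phi (inv x) = inv (phi x)"
proof -
  have x_inv: "inv x \<in> A" using subgroup.m_inv_closed [OF subgroup_A x] .
  have "phi (inv x) \<otimes> phi x = \<one>"
    using phi_mult [OF x_inv x] A_carrier [OF x] by (simp add: phi_one)
  from inv_equality [OF this A_carrier A_carrier] show ?thesis
    using phi_closed x x_inv by simp
qed

lemma phi_eq_one_iff: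
  assumes x: "x \<in> A"
  shows "phi x = \<one> \<longleftrightarrow> x \<in> center G"
proof -
  have "phi x = \<one> \<longleftrightarrow> x \<otimes> h = h \<otimes> x"
    unfolding phi_def using commutator_eq_one_iff A_carrier [OF x] h_carrier .
  also have "\<dots> \<longleftrightarrow> x \<in> center G"
    using central_if_commutes_outside [OF x h_carrier h_notin] h_carrier
    by (auto simp: centralizer_def)
  finally show ?thesis .
qed

lemma phi_conj: "x \<in> carrier G \<Longrightarrow> inv h \<otimes> phi x \<otimes> h = phi (inv h \<otimes> x \<otimes> h)"
  unfolding phi_def using commutator_conj [of x h h] h_carrier by (simp add: group_cancel_simps)

lemma phi_image_0: "phi_image 0 = A"
  by (simp add: phi_image_def)

lemma phi_image_Suc: "phi_image (Suc k) = phi ` phi_image k"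
  by (simp add: phi_image_def image_comp)

lemma phi_image_subset_A: "phi_image k \<subseteq> A"
  by (induction k) (auto simp: phi_image_0 phi_image_Suc phi_closed)

lemma phi_image_Suc_subset: "phi_image (Suc k) \<subseteq> phi_image k"
proof (induction k)
  case 0
  show ?case using phi_closed by (auto simp: phi_image_0 phi_image_Suc)
next
  case (Suc k)
  then show ?case by (simp add: phi_image_Suc image_mono)
qed

lemma phi_image_antimono: "j \<le> k \<Longrightarrow> phi_image k \<subseteq> phi_image j"
  by (induction k rule: dec_induct) (use phi_image_Suc_subset in blast)+

lemma phi_image_stable:
  assumes "phi_image (Suc j) = phi_image j"
  shows "phi_image (j + i) = phi_image j"
proof (induction i)
  case (Suc i)
  have "phi_image (j + Suc i) = phi ` phi_image (j + i)" by (simp add: phi_image_Suc)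
  also have "\<dots> = phi_image j" using Suc assms by (simp add: phi_image_Suc)
  finally show ?case .
qed simp

lemma subgroup_phi_image: "subgroup (phi_image k) G"
proof (induction k)
  case 0
  show ?case using subgroup_A by (simp add: phi_image_0)
next
  case (Suc k)
  have sub_A: "x \<in> phi_image k \<Longrightarrow> x \<in> A" for x using phi_image_subset_A by blast
  show ?case unfolding phi_image_Suc
  proof (rule subgroupI)
    show "phi ` phi_image k \<subseteq> carrier G" using sub_A phi_closed A_carrier by auto
    show "phi ` phi_image k \<noteq> {}" using subgroup.one_closed [OF Suc] by auto
  next
    fix y assume "y \<in> phi ` phi_image k"
    then obtain x where x: "x \<in> phi_image k" and y: "y = phi x" by auto
    have "inv y = phi (inv x)" by (simp add: y phi_inv [OF sub_A [OF x]])
    then show "inv y \<in> phi ` phi_image k"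
      using subgroup.m_inv_closed [OF Suc x] by simp
  next
    fix y z assume "y \<in> phi ` phi_image k" "z \<in> phi ` phi_image k"
    then obtain x w where x: "x \<in> phi_image k" "y = phi x" and w: "w \<in> phi_image k" "z = phi w"
      by auto
    have "y \<otimes> z = phi (x \<otimes> w)" by (simp add: x(2) w(2) phi_mult [OF sub_A [OF x(1)] sub_A [OF w(1)]])
    then show "y \<otimes> z \<in> phi ` phi_image k"
      using subgroup.m_closed [OF Suc x(1) w(1)] by simp
  qed
qed

lemma phi_image_conj_h_closed: "m \<in> phi_image k \<Longrightarrow> inv h \<otimes> m \<otimes> h \<in> phi_image k"
proof (induction k arbitrary: m)
  case 0
  then show ?case using conj_h_closed by (simp add: phi_image_0)
next
  case (Suc k)
  then obtain x where x: "x \<in> phi_image k" and m: "m = phi x" by (auto simp: phi_image_Suc)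
  have "inv h \<otimes> m \<otimes> h = phi (inv h \<otimes> x \<otimes> h)"
    using phi_conj x phi_image_subset_A A_carrier m by blast
  then show ?case using Suc.IH [OF x] by (simp add: phi_image_Suc)
qed

lemma normal_if_conj_h_closed:
  assumes M: "subgroup M G" and M_A: "M \<subseteq> A"
    and conj: "\<And>m. m \<in> M \<Longrightarrow> inv h \<otimes> m \<otimes> h \<in> M"
  shows "M \<lhd> G"
proof -
  have conj_pow: "inv (h [^] i) \<otimes> m \<otimes> h [^] i \<in> M" if m: "m \<in> M" for m and i :: nat
  proof (induction i)
    case 0
    then show ?case using m subgroup.mem_carrier [OF M m] by simp
  next
    case (Suc i)
    have "inv (h [^] Suc i) \<otimes> m \<otimes> h [^] Suc i = inv h \<otimes> (inv (h [^] i) \<otimes> m \<otimes> h [^] i) \<otimes> h"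
      using subgroup.mem_carrier [OF M m] h_carrier by (simp add: group_cancel_simps)
    then show ?case using conj [OF Suc] by simp
  qed
  have conj_closed: "inv g \<otimes> m \<otimes> g \<in> M" if g: "g \<in> carrier G" and m: "m \<in> M" for g m
  proof -
    obtain a i where a: "a \<in> A" and g_eq: "g = a \<otimes> h [^] (i::nat)"
      using mult_pow_decomp [OF h_carrier h_notin g] by blast
    have m_A: "m \<in> A" using m M_A by blast
    have ac: "a \<in> carrier G" and mc: "m \<in> carrier G" using A_carrier a m_A by auto
    have "inv a \<otimes> m \<otimes> a = m"
      using conj_eq_mult_commutator [OF mc ac] commutator_eq_one_iff [OF mc ac] A_commute [OF m_A a] mc
      by simp
    moreover have "inv g \<otimes> m \<otimes> g = inv (h [^] i) \<otimes> (inv a \<otimes> m \<otimes> a) \<otimes> h [^] i"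
      using ac mc h_carrier by (simp add: g_eq group_cancel_simps)
    ultimately show ?thesis using conj_pow [OF m] by simp
  qed
  show ?thesis
  proof (subst normal_inv_iff, intro conjI M ballI)
    fix x m assume "x \<in> carrier G" and "m \<in> M"
    then show "x \<otimes> m \<otimes> inv x \<in> M" using conj_closed [of "inv x" m] by simp
  qed
qed

lemma normal_phi_image: "phi_image k \<lhd> G"
  using normal_if_conj_h_closed [OF subgroup_phi_image phi_image_subset_A phi_image_conj_h_closed] .

lemma phi_image_subset_lower_central: "phi_image k \<subseteq> lower_central G k"
proof (induction k)
  case 0
  show ?case using A_carrier by (auto simp: phi_image_0)
next
  case (Suc k)
  show ?case
  proof
    fix y assume "y \<in> phi_image (Suc k)"
    then obtain x where "x \<in> phi_image k" and "y = phi x" by (auto simp: phi_image_Suc)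
    with Suc show "y \<in> lower_central G (Suc k)"
      using commutator_in_lower_central_Suc [of x k h] h_carrier by (auto simp: phi_def)
  qed
qed

\<comment> \<open>As \<open>G = A\<langle>h\<rangle>\<close> and \<open>A\<close> is abelian, \<open>[b, g]\<close> is a product of conjugates of \<open>[b, h]\<close>.\<close>
lemma commutator_mem_if_phi_mem:
  assumes S_A: "S \<subseteq> A" and M: "M \<lhd> G" and phi_S: "\<And>b. b \<in> S \<Longrightarrow> phi b \<in> M"
    and b: "b \<in> S" and g: "g \<in> carrier G"
  shows "commutator G b g \<in> M"
proof -
  have M_sub: "subgroup M G" using M normal_imp_subgroup by blast
  have b_A: "b \<in> A" using b S_A by blast
  have bc: "b \<in> carrier G" using A_carrier [OF b_A] .
  obtain a i where a: "a \<in> A" and g_eq: "g = a \<otimes> h [^] (i::nat)"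
    using mult_pow_decomp [OF h_carrier h_notin g] by blast
  have pow: "commutator G b (h [^] (j::nat)) \<in> M" for j
  proof (induction j)
    case 0
    then show ?case using bc subgroup.one_closed [OF M_sub] by (simp add: commutator_def)
  next
    case (Suc j)
    have "commutator G b (h [^] Suc j) = commutator G b h \<otimes> (inv h \<otimes> commutator G b (h [^] j) \<otimes> h)"
      using commutator_mult_right [of b "h [^] j" h] bc h_carrier by simp
    moreover have "commutator G b h \<in> M" using phi_S [OF b] by (simp add: phi_def)
    moreover have "inv h \<otimes> commutator G b (h [^] j) \<otimes> h \<in> M"
      using normal.inv_op_closed1 [OF M h_carrier Suc] .
    ultimately show ?case using subgroup.m_closed [OF M_sub] by simp
  qed
  have "commutator G b a = \<one>"
    using commutator_eq_one_iff [OF bc A_carrier [OF a]] A_commute [OF b_A a] by simp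
  then have "commutator G b g = commutator G b (h [^] i)"
    using commutator_mult_right [of b a "h [^] i"] bc A_carrier [OF a] h_carrier by (simp add: g_eq)
  with pow show ?thesis by simp
qed

lemma commutator_mem_phi_image_1:
  assumes u: "u \<in> carrier G" and g: "g \<in> carrier G"
  shows "commutator G u g \<in> phi_image 1"
proof -
  have N: "phi_image 1 \<lhd> G" by (rule normal_phi_image)
  have N_sub: "subgroup (phi_image 1) G" by (rule subgroup_phi_image)
  have from_A: "commutator G a x \<in> phi_image 1" if "a \<in> A" "x \<in> carrier G" for a x
    using commutator_mem_if_phi_mem [OF subset_refl N _ that] by (simp add: phi_image_Suc phi_image_0)
  have from_pow: "commutator G x (h [^] i) \<in> phi_image 1" if x: "x \<in> carrier G" for x and i :: nat
  proof -
    obtain b j where b: "b \<in> A" and x_eq: "x = b \<otimes> h [^] (j::nat)"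
      using mult_pow_decomp [OF h_carrier h_notin x] by blast
    have "commutator G (h [^] j) (h [^] i) = \<one>"
      using commutator_eq_one_iff nat_pow_comm [of h j i] h_carrier by simp
    then have "commutator G x (h [^] i) = inv (h [^] j) \<otimes> commutator G b (h [^] i) \<otimes> h [^] j"
      using commutator_mult_left [of b "h [^] j" "h [^] i"] A_carrier [OF b] h_carrier
      by (simp add: x_eq)
    then show ?thesis using normal.inv_op_closed1 [OF N _ from_A [OF b]] h_carrier by simp
  qed
  obtain a i where a: "a \<in> A" and u_eq: "u = a \<otimes> h [^] (i::nat)"
    using mult_pow_decomp [OF h_carrier h_notin u] by blast
  have "commutator G u g = (inv (h [^] i) \<otimes> commutator G a g \<otimes> h [^] i) \<otimes> commutator G (h [^] i) g"
    using commutator_mult_left [of a "h [^] i" g] A_carrier [OF a] h_carrier g by (simp add: u_eq)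
  moreover have "inv (h [^] i) \<otimes> commutator G a g \<otimes> h [^] i \<in> phi_image 1"
    using normal.inv_op_closed1 [OF N _ from_A [OF a g]] h_carrier by simp
  moreover have "commutator G (h [^] i) g \<in> phi_image 1"
    using commutator_swap [of "h [^] i" g] from_pow [OF g] h_carrier g subgroup.m_inv_closed [OF N_sub]
    by simp
  ultimately show ?thesis using subgroup.m_closed [OF N_sub] by simp
qed

lemma lower_central_subset_phi_image: "1 \<le> k \<Longrightarrow> lower_central G k \<subseteq> phi_image k"
proof (induction k rule: dec_induct)
  case base
  show ?case unfolding One_nat_def
    by (rule lower_central_Suc_subsetI [OF subgroup_phi_image])
      (simp add: commutator_mem_phi_image_1 [unfolded One_nat_def])
next
  case (step k)
  show ?case
  proof (rule lower_central_Suc_subsetI [OF subgroup_phi_image])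
    fix u g assume "u \<in> lower_central G k" and "g \<in> carrier G"
    moreover have "\<And>b. b \<in> phi_image k \<Longrightarrow> phi b \<in> phi_image (Suc k)"
      by (simp add: phi_image_Suc)
    ultimately show "commutator G u g \<in> phi_image (Suc k)"
      using commutator_mem_if_phi_mem [OF phi_image_subset_A normal_phi_image] step.IH by blast
  qed
qed

lemma card_A_factor: "card A = card (phi_image 1) * card (A \<inter> center G)"
proof -
  have image: "phi_image 1 = phi ` A" by (simp add: phi_image_Suc phi_image_0)
  let ?A = "G\<lparr>carrier := A\<rparr>" and ?B = "G\<lparr>carrier := phi ` A\<rparr>"
  have "phi \<in> hom ?A ?B" unfolding hom_def by (auto simp: phi_mult)
  then have "group_hom ?A ?B phi"
    using subgroup_imp_group [OF subgroup_A] subgroup_imp_group [OF subgroup_phi_image [of 1, unfolded image]]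
    by (intro group_hom.intro group_hom_axioms.intro)
  moreover have "kernel ?A ?B phi = A \<inter> center G"
    using phi_eq_one_iff by (auto simp: kernel_def)
  moreover have "finite A" using finite_subset [OF subgroup.subset [OF subgroup_A] finite_carrier] .
  ultimately show ?thesis
    unfolding image using group_hom.card_eq_card_image_mult_card_kernel [of ?A ?B phi] by simp
qed

lemma card_phi_image_1_ge:
  assumes p: "Factorial_Ring.prime p" and order: "order G = p ^ n" and n: "n \<ge> 3"
    and top: "lower_central G (n - 1) = {\<one>}" and low: "lower_central G (n - 2) \<noteq> {\<one>}"
  shows "p ^ (n - 2) \<le> card (phi_image 1)"
proof -
  have "phi_image (n - 1) \<subseteq> {\<one>}" using phi_image_subset_lower_central [of "n - 1"] top by simp
  then have trivial: "phi_image (n - 1) = {\<one>}"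
    using subgroup.one_closed [OF subgroup_phi_image [of "n - 1"]] by blast
  have nontrivial: "phi_image (n - 2) \<noteq> {\<one>}"
  proof
    assume "phi_image (n - 2) = {\<one>}"
    with lower_central_subset_phi_image [of "n - 2"] n have "lower_central G (n - 2) \<subseteq> {\<one>}" by simp
    with low show False using subgroup.one_closed [OF subgroup_lower_central] by blast
  qed
  have strict: "phi_image (Suc (Suc k)) \<subset> phi_image (Suc k)" if k: "k < n - 3" for k
  proof -
    have "phi_image (Suc (Suc k)) \<noteq> phi_image (Suc k)"
    proof
      assume "phi_image (Suc (Suc k)) = phi_image (Suc k)"
      moreover have "n - 1 = Suc k + (n - 2 - k)" using k by simp
      ultimately have "phi_image (n - 1) = phi_image (Suc k)" using phi_image_stable by metis
      moreover have "phi_image (n - 2) \<subseteq> phi_image (Suc k)" using phi_image_antimono k by simp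
      ultimately show False using trivial nontrivial subgroup.one_closed [OF subgroup_phi_image] by blast
    qed
    with phi_image_Suc_subset show ?thesis by blast
  qed
  have n_eq: "n - 2 = Suc (n - 3)" using n by simp
  have "p ^ (n - 3) * card (phi_image (Suc (n - 3))) \<le> card (phi_image (Suc 0))"
    using prime_power_mult_card_le_of_chain [OF p order, of "\<lambda>k. phi_image (Suc k)"]
      subgroup_phi_image strict by blast
  then have chain: "p ^ (n - 3) * card (phi_image (n - 2)) \<le> card (phi_image 1)" by (simp add: n_eq)
  have "p ^ (n - 2) = p ^ (n - 3) * p" by (simp add: n_eq mult.commute)
  also have "\<dots> \<le> p ^ (n - 3) * card (phi_image (n - 2))"
    using prime_le_card_subgroup [OF p order subgroup_phi_image nontrivial] by simp
  finally show ?thesis using chain by simp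
qed

lemma card_center_inter_le:
  assumes p: "Factorial_Ring.prime p" and order: "order G = p ^ n" and n: "n \<ge> 3"
    and top: "lower_central G (n - 1) = {\<one>}" and low: "lower_central G (n - 2) \<noteq> {\<one>}"
  shows "card (A \<inter> center G) \<le> p"
proof -
  have p1: "p > 1" using prime_gt_1_nat [OF p] .
  obtain e where e: "card A = p ^ e" using card_subgroup_prime_power [OF p order subgroup_A] by blast
  have "A \<subset> carrier G" using maximal subgroup.subset [OF subgroup_A] by (auto simp: maximal_subgroup_def)
  then have "card A < p ^ n" using psubset_card_mono [OF finite_carrier] order by (simp add: order_def)
  then have "e \<le> Suc (n - 2)" using e n p1 by (simp add: power_strict_increasing_iff)
  then have "p ^ e \<le> p ^ Suc (n - 2)" using p1 by (intro power_increasing) auto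
  then have "card A \<le> p ^ (n - 2) * p" using e by (simp add: mult.commute)
  moreover have "p ^ (n - 2) * card (A \<inter> center G) \<le> card A"
    using card_A_factor card_phi_image_1_ge [OF assms] by simp
  ultimately have "p ^ (n - 2) * card (A \<inter> center G) \<le> p ^ (n - 2) * p" by linarith
  then show ?thesis using p1 by simp
qed

\<comment> \<open>The iterates of \<open>a\<close> under \<open>phi\<close> stay in \<open>H\<close> and reach \<open>\<one>\<close>; the last nontrivial
  one is central.\<close>
lemma exists_central_in_subgroup:
  assumes nilpotent: "lower_central G m = {\<one>}" and H: "subgroup H G" and h_H: "h \<in> H"
    and a: "a \<in> H" "a \<in> A" and a_not_central: "a \<notin> center G"
  shows "\<exists>z \<in> H \<inter> (A \<inter> center G). z \<noteq> \<one>"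
proof -
  define s where "s k = (phi ^^ k) a" for k
  have s_H: "s k \<in> H" for k
  proof (induction k)
    case 0
    then show ?case using a by (simp add: s_def)
  next
    case (Suc k)
    then show ?case using subgroup_commutator_closed [OF H _ h_H] by (simp add: s_def phi_def)
  qed
  have s_phi_image: "s k \<in> phi_image k" for k using a(2) by (simp add: s_def phi_image_def)
  have s_A: "s k \<in> A" for k using s_phi_image phi_image_subset_A by blast
  have "s m = \<one>" using s_phi_image [of m] phi_image_subset_lower_central [of m] nilpotent by auto
  then have ex: "\<exists>k. s k = \<one>" by blast
  define k where "k = (LEAST k. s k = \<one>)"
  have s_k: "s k = \<one>" unfolding k_def using LeastI_ex [OF ex] .
  have "\<one> \<in> center G" by (simp add: centralizer_def)
  with a_not_central have "s 0 \<noteq> \<one>" by (auto simp: s_def)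
  with s_k have "k \<noteq> 0" by (cases k) auto
  then obtain j where j: "k = Suc j" using not0_implies_Suc by blast
  then have "s j \<noteq> \<one>" using not_less_Least [of j "\<lambda>k. s k = \<one>"] k_def by auto
  moreover have "phi (s j) = \<one>" using s_k j by (simp add: s_def)
  with phi_eq_one_iff [OF s_A] have "s j \<in> center G" by simp
  ultimately show ?thesis using s_H s_A by blast
qed

lemma center_inter_subset:
  assumes p: "Factorial_Ring.prime p" and order: "order G = p ^ n"
    and card_le: "card (A \<inter> center G) \<le> p" and nilpotent: "lower_central G m = {\<one>}"
    and H: "subgroup H G" and h_H: "h \<in> H" and nonabelian: "\<not> abelian_set G H"
  shows "A \<inter> center G \<subseteq> H"
proof -
  obtain a where a: "a \<in> H" "a \<in> A" and a_not_central: "a \<notin> center G"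
    using abelian_set_if_inter_central [OF H h_H h_notin] nonabelian by blast
  obtain z where z: "z \<in> H \<inter> (A \<inter> center G)" and "z \<noteq> \<one>"
    using exists_central_in_subgroup [OF nilpotent H h_H a a_not_central] by blast
  have Z: "subgroup (A \<inter> center G) G"
    using subgroups_Inter_pair [OF subgroup_A subgroup_centralizer] by blast
  have "H \<inter> (A \<inter> center G) \<noteq> {\<one>}" using z \<open>z \<noteq> \<one>\<close> by blast
  then have "H \<inter> (A \<inter> center G) = A \<inter> center G"
    using subgroup_eq_if_card_le_prime [OF p order subgroups_Inter_pair [OF H Z] Z _ card_le] by blast
  then show ?thesis by blast
qed

lemma centralizer_subset:
  assumes H: "subgroup H G" and h_H: "h \<in> H" and nonabelian: "\<not> abelian_set G H"
    and center_H: "A \<inter> center G \<subseteq> H"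
  shows "centralizer G H \<subseteq> H"
proof
  fix c assume "c \<in> centralizer G H"
  then have c: "c \<in> carrier G" and c_comm: "\<And>x. x \<in> H \<Longrightarrow> c \<otimes> x = x \<otimes> c"
    unfolding centralizer_def by auto
  show "c \<in> H"
  proof (cases "c \<in> A")
    case True
    have "c \<in> center G"
      using central_if_commutes_outside [OF True h_carrier h_notin c_comm [OF h_H]] .
    with True center_H show ?thesis by blast
  next
    case False
    have "H \<inter> A \<subseteq> center G"
    proof
      fix x assume "x \<in> H \<inter> A"
      then show "x \<in> center G" using central_if_commutes_outside [OF _ c False] c_comm by simp
    qed
    with nonabelian show ?thesis using abelian_set_if_inter_central [OF H h_H h_notin] by blast
  qed
qed

end

theorem lemma6p11:
  fixes G (structure) and p :: nat
  assumes "group G" and "Factorial_Ring.prime p" and "finite (carrier G)"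
    and "maximal_class G p"
    and "\<exists>M. maximal_subgroup G M \<and> abelian_set G M"
    and "subgroup H G" and "\<not> abelian_set G H"
  shows "centralizer G H \<subseteq> H"
proof -
  interpret group G by (fact assms(1))
  obtain n where n: "n \<ge> 2" and order: "order G = p ^ n"
    and top: "lower_central G (n - 1) = {\<one>}" and low: "lower_central G (n - 2) \<noteq> {\<one>}"
    using maximal_class_lower_central [OF assms(4)] by blast
  obtain A where A_max: "maximal_subgroup G A" and A_abelian: "abelian_set G A"
    using assms(5) by blast
  have "n \<noteq> 2"
  proof
    assume "n = 2"
    with top have "lower_central G 1 = {\<one>}" by simp
    with assms(7) show False
      using abelian_set_if_lower_central_one subgroup.subset [OF assms(6)] by blast
  qed
  with n have n3: "n \<ge> 3" by simp
  obtain h where h: "h \<in> H" "h \<notin> A" using assms(7) A_abelian unfolding abelian_set_def by blast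
  have "commutator_endomorphism G A h"
    unfolding commutator_endomorphism_def commutator_endomorphism_axioms_def
      abelian_maximal_subgroup_def abelian_maximal_subgroup_axioms_def
    using assms(1,3) A_max maximal_subgroup_normal [OF assms(3) top A_max] A_abelian
      subgroup.mem_carrier [OF assms(6) h(1)] h(2)
    by blast
  then interpret commutator_endomorphism G A h .
  have "card (A \<inter> center G) \<le> p" using card_center_inter_le [OF assms(2) order n3 top low] .
  then have "A \<inter> center G \<subseteq> H" by (rule center_inter_subset [OF assms(2) order _ top assms(6) h(1) assms(7)])
  then show ?thesis by (rule centralizer_subset [OF assms(6) h(1) assms(7)])
qed

end
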